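(* Let $k\ge1$, $GP=GP(3k,k)$, and let $\gamma:E(GP)\to\{1,2,3\}$ be a proper edge colouring. Let $(a,b,c)$ be a permutation of $(1,2,3)$ such that $\gamma_1$ is a vertex of $T_\pm$ or of $H_\pm$. Then $$\operatorname{sign}(\gamma)=\prod_{i=1}^k \operatorname{sign}(\gamma_i,\gamma_{i+1}).$$
   Context: $GP(3k,k)$ has vertex set $\{u_i,v_i : i\in\mathbb{Z}_{3k}\}$ and edges $u_iu_{i+1}$, $u_iv_i$, $v_iv_{i+k}$ for $i\in\mathbb{Z}_{3k}$ (indices modulo $3k$). For $i=1,\dots,k+1$ let $\gamma_i=(\gamma(u_iu_{i+1}),\gamma(u_{k+i}u_{k+i+1}),\gamma(u_{2k+i}u_{2k+i+1}))$, written as a string $xyz$. Vertex signs: $\operatorname{sign}_\gamma(u_i)=+$ if $(\gamma(u_{i-1}u_i),\gamma(u_iu_{i+1}),\gamma(u_iv_i))\in\{123,231,312\}$ and $-$ otherwise; $\operatorname{sign}_\gamma(v_i)=+$ if $(\gamma(v_{k+i}v_i),\gamma(v_iv_{2k+i}),\gamma(v_iu_i))\in\{123,231,312\}$ and $-$ otherwise. Then $\operatorname{sign}(\gamma)=\prod_{w\in V(GP)}\operatorname{sign}_\gamma(w)$ (with $+,-$ multiplied as $\pm1$). Given the permutation $(a,b,c)$: $T_\pm$ is the directed graph on vertices $abc,bca,cab$ having both arcs between each pair, with signs $\operatorname{sign}(abc,cab)=\operatorname{sign}(cab,bca)=\operatorname{sign}(bca,abc)=+$ and the three reverse arcs negative.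 $H_\pm$ is the directed graph on the $6$-cycle $aba-bcc-aab-cbc-baa-ccb-aba$ with both arcs for each edge, where the arcs $aba\to bcc$, $bcc\to aab$, $aab\to cbc$, $cbc\to baa$, $baa\to ccb$, $ccb\to aba$ have sign $+$ and their reverses have sign $-$. $\operatorname{sign}(x,y)$ denotes the sign of the arc from $x$ to $y$. *)

theory Defs
  imports Main
begin

text \<open>Vertices of GP(3k,k): U i = u_i, V i = v_i, with indices taken in {0..<3k}
  (i.e. modulo 3k).\<close>
datatype gpv = U nat | V nat

definition gp_edges :: "nat \<Rightarrow> gpv set set" where
  "gp_edges k = (\<Union>i<3*k. {{U i, U ((i+1) mod (3*k))}, {U i, V i},
                            {V i, V ((i+k) mod (3*k))}})"

definition proper_colouring :: "nat \<Rightarrow> (gpv set \<Rightarrow> nat) \<Rightarrow> bool" where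
  "proper_colouring k \<gamma> \<longleftrightarrow>
     (\<forall>e\<in>gp_edges k. \<gamma> e \<in> {1,2,3}) \<and>
     (\<forall>e\<in>gp_edges k. \<forall>f\<in>gp_edges k. e \<noteq> f \<and> e \<inter> f \<noteq> {} \<longrightarrow> \<gamma> e \<noteq> \<gamma> f)"

definition gam :: "nat \<Rightarrow> (gpv set \<Rightarrow> nat) \<Rightarrow> nat \<Rightarrow> nat \<times> nat \<times> nat" where
  "gam k \<gamma> i =
     (\<gamma> {U (i mod (3*k)), U ((i+1) mod (3*k))},
      \<gamma> {U ((k+i) mod (3*k)), U ((k+i+1) mod (3*k))},
      \<gamma> {U ((2*k+i) mod (3*k)), U ((2*k+i+1) mod (3*k))})"

definition pos_triple :: "nat \<times> nat \<times> nat \<Rightarrow> bool" where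
  "pos_triple t \<longleftrightarrow> t \<in> {(1,2,3), (2,3,1), (3,1,2)}"

definition pm :: "bool \<Rightarrow> int" where
  "pm b = (if b then 1 else -1)"

definition sign_u :: "nat \<Rightarrow> (gpv set \<Rightarrow> nat) \<Rightarrow> nat \<Rightarrow> int" where
  "sign_u k \<gamma> i = pm (pos_triple
     (\<gamma> {U ((i + 3*k - 1) mod (3*k)), U i}, \<gamma> {U i, U ((i+1) mod (3*k))}, \<gamma> {U i, V i}))"

definition sign_v :: "nat \<Rightarrow> (gpv set \<Rightarrow> nat) \<Rightarrow> nat \<Rightarrow> int" where
  "sign_v k \<gamma> i = pm (pos_triple
     (\<gamma> {V ((k+i) mod (3*k)), V i}, \<gamma> {V i, V ((2*k+i) mod (3*k))}, \<gamma> {V i, U i}))"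

definition gp_sign :: "nat \<Rightarrow> (gpv set \<Rightarrow> nat) \<Rightarrow> int" where
  "gp_sign k \<gamma> = (\<Prod>i<3*k. sign_u k \<gamma> i * sign_v k \<gamma> i)"

definition T_verts :: "nat \<Rightarrow> nat \<Rightarrow> nat \<Rightarrow> (nat \<times> nat \<times> nat) set" where
  "T_verts a b c = {(a,b,c), (b,c,a), (c,a,b)}"

definition H_verts :: "nat \<Rightarrow> nat \<Rightarrow> nat \<Rightarrow> (nat \<times> nat \<times> nat) set" where
  "H_verts a b c = {(a,b,a), (b,c,c), (a,a,b), (c,b,c), (b,a,a), (c,c,b)}"

text \<open>Positive arcs of T_\<pm> and H_\<pm>; negative arcs are their reverses.\<close>
definition pos_arcs :: "nat \<Rightarrow> nat \<Rightarrow> nat \<Rightarrow> ((nat \<times> nat \<times> nat) \<times> (nat \<times> nat \<times> nat)) set" where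
  "pos_arcs a b c =
     {((a,b,c),(c,a,b)), ((c,a,b),(b,c,a)), ((b,c,a),(a,b,c)),
      ((a,b,a),(b,c,c)), ((b,c,c),(a,a,b)), ((a,a,b),(c,b,c)),
      ((c,b,c),(b,a,a)), ((b,a,a),(c,c,b)), ((c,c,b),(a,b,a))}"

definition arc_sign :: "nat \<Rightarrow> nat \<Rightarrow> nat \<Rightarrow> nat \<times> nat \<times> nat \<Rightarrow> nat \<times> nat \<times> nat \<Rightarrow> int" where
  "arc_sign a b c x y =
     (if (x,y) \<in> pos_arcs a b c then 1
      else if (y,x) \<in> pos_arcs a b c then -1 else 0)"

end

theory Submission
  imports Defs
begin

text \<open>The $6k$ vertices split into the $k$ slices
  $\{u_j, u_{j+k}, u_{j+2k}, v_j, v_{j+k}, v_{j+2k}\}$. Inside a slice, the inner vertices form the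
  triangle $v_j v_{j+k} v_{j+2k}$, whose three colours are a permutation of $1,2,3$; these colours
  determine the spoke colours, which together with $\gamma_{j-1}$ determine $\gamma_j$. A finite
  check over all permutations $(a,b,c)$, all triangle colourings and all nine vertices of
  $T_\pm \cup H_\pm$ shows that the six signs of the slice multiply to
  $\operatorname{sign}(\gamma_{j-1},\gamma_j)$ and that $\gamma_j$ is again a vertex of
  $T_\pm \cup H_\pm$. Induction along $j$ and periodicity of the slices give the product formula.\<close>

definition colour_perms :: "(nat \<times> nat \<times> nat) set" where
  "colour_perms = {(1,2,3), (1,3,2), (2,1,3), (2,3,1), (3,1,2), (3,2,1)}"

lemma mem_colour_perms:
  fixes a b c :: nat
  assumes "{a, b, c} \<subseteq> {1, 2, 3}" and "distinct [a, b, c]"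
  shows "(a, b, c) \<in> colour_perms"
  using assms by (auto simp: colour_perms_def)

lemma third_colour:
  fixes u v w :: nat
  assumes "u \<in> {1, 2, 3}" "v \<in> {1, 2, 3}" "w \<in> {1, 2, 3}" and "distinct [u, v, w]"
  shows "w = 6 - u - v"
  using assms by auto

text \<open>One slice in colours: $x$ and $y$ are $\gamma_{j-1}$ and $\gamma_j$, read at
  $u_j, u_{j+k}, u_{j+2k}$; $P, Q, R$ colour the inner edges $v_jv_{j+k}$, $v_{j+k}v_{j+2k}$,
  $v_{j+2k}v_j$; the spoke colour $s_i$ is the colour missing at $v_{j+(i-1)k}$, and $y_i$ the one
  missing at $u_{j+(i-1)k}$.\<close>

lemma slice_table:
  "\<forall>(a, b, c) \<in> colour_perms. \<forall>(P, Q, R) \<in> colour_perms.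
   \<forall>(x1, x2, x3) \<in> T_verts a b c \<union> H_verts a b c.
     let s1 = 6 - P - R; s2 = 6 - Q - P; s3 = 6 - R - Q;
         y1 = 6 - x1 - s1; y2 = 6 - x2 - s2; y3 = 6 - x3 - s3
     in x1 \<noteq> s1 \<and> x2 \<noteq> s2 \<and> x3 \<noteq> s3 \<longrightarrow>
        pm (pos_triple (x1, y1, s1)) * pm (pos_triple (P, R, s1)) *
        (pm (pos_triple (x2, y2, s2)) * pm (pos_triple (Q, P, s2))) *
        (pm (pos_triple (x3, y3, s3)) * pm (pos_triple (R, Q, s3)))
          = arc_sign a b c (x1, x2, x3) (y1, y2, y3) \<and>
        (y1, y2, y3) \<in> T_verts a b c \<union> H_verts a b c"
  unfolding colour_perms_def by code_simp

lemma slice_colours_arc_sign: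
  fixes a b c x1 x2 x3 y1 y2 y3 s1 s2 s3 P Q R :: nat
  assumes abc: "(a, b, c) \<in> colour_perms"
    and x: "(x1, x2, x3) \<in> T_verts a b c \<union> H_verts a b c"
    and colours: "{y1, y2, y3, s1, s2, s3, P, Q, R} \<subseteq> {1, 2, 3}"
    and distinct: "distinct [x1, y1, s1]" "distinct [x2, y2, s2]" "distinct [x3, y3, s3]"
      "distinct [P, R, s1]" "distinct [Q, P, s2]" "distinct [R, Q, s3]"
  shows "pm (pos_triple (x1, y1, s1)) * pm (pos_triple (P, R, s1)) *
         (pm (pos_triple (x2, y2, s2)) * pm (pos_triple (Q, P, s2))) *
         (pm (pos_triple (x3, y3, s3)) * pm (pos_triple (R, Q, s3)))
       = arc_sign a b c (x1, x2, x3) (y1, y2, y3)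
     \<and> (y1, y2, y3) \<in> T_verts a b c \<union> H_verts a b c"
proof -
  have x_range: "x1 \<in> {1, 2, 3}" "x2 \<in> {1, 2, 3}" "x3 \<in> {1, 2, 3}"
    using x abc by (auto simp: T_verts_def H_verts_def colour_perms_def)
  have range: "y1 \<in> {1, 2, 3}" "y2 \<in> {1, 2, 3}" "y3 \<in> {1, 2, 3}"
    "s1 \<in> {1, 2, 3}" "s2 \<in> {1, 2, 3}" "s3 \<in> {1, 2, 3}"
    "P \<in> {1, 2, 3}" "Q \<in> {1, 2, 3}" "R \<in> {1, 2, 3}"
    using colours by simp_all
  have xsy: "distinct [x1, s1, y1]" "distinct [x2, s2, y2]" "distinct [x3, s3, y3]"
    using distinct(1-3) by auto
  have s: "s1 = 6 - P - R" "s2 = 6 - Q - P" "s3 = 6 - R - Q"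
    by (fact third_colour[OF range(7) range(9) range(4) distinct(4)]
        third_colour[OF range(8) range(7) range(5) distinct(5)]
        third_colour[OF range(9) range(8) range(6) distinct(6)])+
  have y: "y1 = 6 - x1 - s1" "y2 = 6 - x2 - s2" "y3 = 6 - x3 - s3"
    by (fact third_colour[OF x_range(1) range(4) range(1) xsy(1)]
        third_colour[OF x_range(2) range(5) range(2) xsy(2)]
        third_colour[OF x_range(3) range(6) range(3) xsy(3)])+
  have "(P, Q, R) \<in> colour_perms"
    using range(7-9) distinct(4-6) by (intro mem_colour_perms) auto
  with slice_table abc x have "x1 \<noteq> s1 \<and> x2 \<noteq> s2 \<and> x3 \<noteq> s3 \<longrightarrow> ?thesis"
    unfolding s y Let_def by fast
  with distinct show ?thesis
    by simp
qed

definition rim_edge :: "nat \<Rightarrow> nat \<Rightarrow> gpv set" where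
  "rim_edge k j = {U (j mod (3*k)), U (Suc j mod (3*k))}"

definition spoke_edge :: "nat \<Rightarrow> nat \<Rightarrow> gpv set" where
  "spoke_edge k j = {U (j mod (3*k)), V (j mod (3*k))}"

definition inner_edge :: "nat \<Rightarrow> nat \<Rightarrow> gpv set" where
  "inner_edge k j = {V (j mod (3*k)), V ((j + k) mod (3*k))}"

lemma edges_in_gp_edges:
  assumes "0 < k"
  shows "rim_edge k j \<in> gp_edges k" "spoke_edge k j \<in> gp_edges k" "inner_edge k j \<in> gp_edges k"
proof -
  have "j mod (3*k) < 3*k"
    using assms by simp
  then show "rim_edge k j \<in> gp_edges k" "spoke_edge k j \<in> gp_edges k"
    "inner_edge k j \<in> gp_edges k"
    unfolding gp_edges_def rim_edge_def spoke_edge_def inner_edge_def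
    by (auto simp: mod_Suc_eq mod_add_left_eq)
qed

lemma inner_edge_add_period: "inner_edge k (j + 3*k) = inner_edge k j"
proof -
  have "j + 3*k + k = (j + k) + 3*k"
    by simp
  then show ?thesis
    unfolding inner_edge_def by (simp only: mod_add_self2)
qed

lemma mod_add_neq:
  fixes n :: nat
  assumes "0 < d" and "d < n"
  shows "(j + d) mod n \<noteq> j mod n"
  using assms by (auto simp: mod_eq_dvd_iff_nat dest: nat_dvd_not_less)

lemma rim_edge_neq_Suc: "0 < k \<Longrightarrow> rim_edge k j \<noteq> rim_edge k (Suc j)"
  using mod_add_neq[of 2 "3*k" j] by (auto simp: rim_edge_def doubleton_eq_iff)

lemma inner_edge_neq_add:
  assumes "0 < k"
  shows "inner_edge k j \<noteq> inner_edge k (j + 2*k)"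
proof -
  have "inner_edge k (j + 2*k) = {V ((j + 2*k) mod (3*k)), V (j mod (3*k))}"
    using inner_edge_add_period[of k j] by (simp add: inner_edge_def)
  moreover have "(j + 2*k) mod (3*k) \<noteq> j mod (3*k)" "(j + k + k) mod (3*k) \<noteq> (j + k) mod (3*k)"
    using assms mod_add_neq[of "2*k" "3*k" j] mod_add_neq[of k "3*k" "j + k"] by simp_all
  ultimately show ?thesis
    by (auto simp: inner_edge_def doubleton_eq_iff mult_2 add.assoc)
qed

lemma proper_colouring_range:
  "proper_colouring k \<gamma> \<Longrightarrow> e \<in> gp_edges k \<Longrightarrow> \<gamma> e \<in> {1, 2, 3}"
  unfolding proper_colouring_def by blast

lemma proper_colouring_distinct_at_vertex:
  assumes "proper_colouring k \<gamma>" and "{e1, e2, e3} \<subseteq> gp_edges k"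
    and "distinct [e1, e2, e3]" and "w \<in> e1 \<inter> e2 \<inter> e3"
  shows "distinct [\<gamma> e1, \<gamma> e2, \<gamma> e3]"
  using assms unfolding proper_colouring_def by (simp, blast)

lemma colours_at_u_distinct:
  assumes "0 < k" and "proper_colouring k \<gamma>"
  shows "distinct [\<gamma> (rim_edge k j), \<gamma> (rim_edge k (Suc j)), \<gamma> (spoke_edge k (Suc j))]"
proof (rule proper_colouring_distinct_at_vertex[OF assms(2), where w = "U (Suc j mod (3*k))"])
  show "{rim_edge k j, rim_edge k (Suc j), spoke_edge k (Suc j)} \<subseteq> gp_edges k"
    using edges_in_gp_edges[OF assms(1)] by simp
  show "distinct [rim_edge k j, rim_edge k (Suc j), spoke_edge k (Suc j)]"
    using rim_edge_neq_Suc[OF assms(1)]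
    by (auto simp: rim_edge_def spoke_edge_def doubleton_eq_iff)
qed (simp add: rim_edge_def spoke_edge_def)

lemma colours_at_v_distinct:
  assumes "0 < k" and "proper_colouring k \<gamma>"
  shows "distinct [\<gamma> (inner_edge k j), \<gamma> (inner_edge k (j + 2*k)), \<gamma> (spoke_edge k j)]"
proof (rule proper_colouring_distinct_at_vertex[OF assms(2), where w = "V (j mod (3*k))"])
  show "{inner_edge k j, inner_edge k (j + 2*k), spoke_edge k j} \<subseteq> gp_edges k"
    using edges_in_gp_edges[OF assms(1)] by simp
  show "distinct [inner_edge k j, inner_edge k (j + 2*k), spoke_edge k j]"
    using inner_edge_neq_add[OF assms(1)]
    by (auto simp: inner_edge_def spoke_edge_def doubleton_eq_iff)
  show "V (j mod (3*k)) \<in> inner_edge k j \<inter> inner_edge k (j + 2*k) \<inter> spoke_edge k j"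
    using inner_edge_add_period[of k j] by (auto simp: inner_edge_def spoke_edge_def)
qed

lemma gam_eq_rim_colours:
  "gam k \<gamma> i = (\<gamma> (rim_edge k i), \<gamma> (rim_edge k (i + k)), \<gamma> (rim_edge k (i + 2*k)))"
  by (simp add: gam_def rim_edge_def ac_simps)

lemma sign_u_Suc_mod:
  assumes "0 < k"
  shows "sign_u k \<gamma> (Suc j mod (3*k))
    = pm (pos_triple (\<gamma> (rim_edge k j), \<gamma> (rim_edge k (Suc j)), \<gamma> (spoke_edge k (Suc j))))"
proof -
  have "(Suc j mod (3*k) + 3*k - 1) mod (3*k) = j mod (3*k)"
    using assms mod_Suc[of j "3*k"] by fastforce
  then show ?thesis
    by (simp add: sign_u_def rim_edge_def spoke_edge_def mod_Suc_eq)
qed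

lemma sign_v_mod:
  "sign_v k \<gamma> (j mod (3*k))
    = pm (pos_triple (\<gamma> (inner_edge k j), \<gamma> (inner_edge k (j + 2*k)), \<gamma> (spoke_edge k j)))"
proof -
  have "(j + 2*k + k) mod (3*k) = j mod (3*k)"
    by (simp add: add.assoc)
  then show ?thesis
    by (simp add: sign_v_def inner_edge_def spoke_edge_def mod_add_right_eq insert_commute
        add.commute)
qed

definition spoke_sign :: "nat \<Rightarrow> (gpv set \<Rightarrow> nat) \<Rightarrow> nat \<Rightarrow> int" where
  "spoke_sign k \<gamma> j = sign_u k \<gamma> (j mod (3*k)) * sign_v k \<gamma> (j mod (3*k))"

definition slice_sign :: "nat \<Rightarrow> (gpv set \<Rightarrow> nat) \<Rightarrow> nat \<Rightarrow> int" where
  "slice_sign k \<gamma> j = spoke_sign k \<gamma> j * spoke_sign k \<gamma> (j + k) * spoke_sign k \<gamma> (j + 2*k)"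

lemma slice_sign_eq_arc_sign:
  assumes k: "0 < k" and \<gamma>: "proper_colouring k \<gamma>" and abc: "(a, b, c) \<in> colour_perms"
    and j: "gam k \<gamma> j \<in> T_verts a b c \<union> H_verts a b c"
  shows "slice_sign k \<gamma> (Suc j) = arc_sign a b c (gam k \<gamma> j) (gam k \<gamma> (Suc j))
    \<and> gam k \<gamma> (Suc j) \<in> T_verts a b c \<union> H_verts a b c"
proof -
  let ?r = "\<lambda>i. \<gamma> (rim_edge k i)" and ?s = "\<lambda>i. \<gamma> (spoke_edge k i)"
    and ?v = "\<lambda>i. \<gamma> (inner_edge k i)"
  have spoke_sign: "spoke_sign k \<gamma> (Suc i)
      = pm (pos_triple (?r i, ?r (Suc i), ?s (Suc i)))
        * pm (pos_triple (?v (Suc i), ?v (Suc i + 2*k), ?s (Suc i)))"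
    for i
    unfolding spoke_sign_def sign_u_Suc_mod[OF k] sign_v_mod ..
  have x: "(?r j, ?r (j + k), ?r (j + 2*k)) \<in> T_verts a b c \<union> H_verts a b c"
    using j by (simp add: gam_eq_rim_colours)
  have "{?r i, ?s i, ?v i} \<subseteq> {1, 2, 3}" for i
    using proper_colouring_range[OF \<gamma>] edges_in_gp_edges[OF k] by simp
  then have colours: "{?r (Suc j), ?r (Suc (j + k)), ?r (Suc (j + 2*k)),
      ?s (Suc j), ?s (Suc (j + k)), ?s (Suc (j + 2*k)),
      ?v (Suc j), ?v (Suc (j + k)), ?v (Suc (j + 2*k))} \<subseteq> {1, 2, 3}"
    by simp
  have u: "distinct [?r j, ?r (Suc j), ?s (Suc j)]"
    "distinct [?r (j + k), ?r (Suc (j + k)), ?s (Suc (j + k))]"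
    "distinct [?r (j + 2*k), ?r (Suc (j + 2*k)), ?s (Suc (j + 2*k))]"
    by (rule colours_at_u_distinct[OF k \<gamma>])+
  have period: "?v (Suc (j + k) + 2*k) = ?v (Suc j)" "?v (Suc (j + 2*k) + 2*k) = ?v (Suc (j + k))"
    using inner_edge_add_period[of k "Suc j"] inner_edge_add_period[of k "Suc (j + k)"]
    by (simp_all add: ac_simps)
  then have w: "distinct [?v (Suc j), ?v (Suc (j + 2*k)), ?s (Suc j)]"
    "distinct [?v (Suc (j + k)), ?v (Suc j), ?s (Suc (j + k))]"
    "distinct [?v (Suc (j + 2*k)), ?v (Suc (j + k)), ?s (Suc (j + 2*k))]"
    using colours_at_v_distinct[OF k \<gamma>, of "Suc j"]
      colours_at_v_distinct[OF k \<gamma>, of "Suc (j + k)"]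
      colours_at_v_distinct[OF k \<gamma>, of "Suc (j + 2*k)"]
    by simp_all
  have "slice_sign k \<gamma> (Suc j)
      = spoke_sign k \<gamma> (Suc j) * spoke_sign k \<gamma> (Suc (j + k)) * spoke_sign k \<gamma> (Suc (j + 2*k))"
    by (simp add: slice_sign_def)
  then show ?thesis
    using slice_colours_arc_sign[OF abc x colours u(1) u(2) u(3) w]
    unfolding spoke_sign period by (simp add: gam_eq_rim_colours)
qed

lemma prod_lessThan_add:
  fixes f :: "nat \<Rightarrow> 'a::comm_monoid_mult"
  shows "(\<Prod>i<m + n. f i) = (\<Prod>i<m. f i) * (\<Prod>i<n. f (i + m))"
  by (induction n) (simp_all add: ac_simps)

lemma prod_lessThan_shift_periodic:
  fixes f :: "nat \<Rightarrow> 'a::comm_monoid_mult"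
  assumes periodic: "\<And>j. f (j + k) = f j"
  shows "(\<Prod>i<k. f (i + m)) = (\<Prod>i<k. f i)"
proof (induction m)
  case (Suc m)
  show ?case
  proof (cases k)
    case (Suc l)
    have "(\<Prod>i<k. f (i + Suc m)) = (\<Prod>i<l. f (Suc i + m)) * f (k + m)"
      using Suc by (simp add: prod.lessThan_Suc)
    also have "\<dots> = f m * (\<Prod>i<l. f (Suc i + m))"
      using periodic[of m] by (simp add: ac_simps)
    also have "\<dots> = (\<Prod>i<k. f (i + m))"
      unfolding Suc prod.lessThan_Suc_shift by simp
    finally show ?thesis
      using Suc.IH by simp
  qed simp
qed simp

lemma spoke_sign_add_period: "spoke_sign k \<gamma> (j + 3*k) = spoke_sign k \<gamma> j"
  by (simp add: spoke_sign_def)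

lemma slice_sign_add_period: "slice_sign k \<gamma> (j + k) = slice_sign k \<gamma> j"
proof -
  have shift: "j + k + k = j + 2*k" "j + k + 2*k = j + 3*k"
    by simp_all
  show ?thesis
    unfolding slice_sign_def shift spoke_sign_add_period by (simp only: mult_ac)
qed

lemma gp_sign_eq_prod_slice_sign: "gp_sign k \<gamma> = (\<Prod>i<k. slice_sign k \<gamma> (i + m))"
proof -
  have "gp_sign k \<gamma> = (\<Prod>i<k + k + k. spoke_sign k \<gamma> i)"
    unfolding gp_sign_def spoke_sign_def by (intro prod.cong) auto
  also have "\<dots> = (\<Prod>i<k. spoke_sign k \<gamma> i) * (\<Prod>i<k. spoke_sign k \<gamma> (i + k))
      * (\<Prod>i<k. spoke_sign k \<gamma> (i + (k + k)))"
    by (simp only: prod_lessThan_add)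
  also have "\<dots> = (\<Prod>i<k. slice_sign k \<gamma> i)"
    by (simp only: slice_sign_def mult_2 prod.distrib)
  also have "\<dots> = (\<Prod>i<k. slice_sign k \<gamma> (i + m))"
    by (intro prod_lessThan_shift_periodic[symmetric] slice_sign_add_period)
  finally show ?thesis .
qed

theorem lemma10:
  fixes k :: nat and \<gamma> :: "gpv set \<Rightarrow> nat" and a b c :: nat
  assumes "k \<ge> 1"
    and "proper_colouring k \<gamma>"
    and "distinct [a, b, c]" and "{a, b, c} = {1, 2, 3}"
    and "gam k \<gamma> 1 \<in> T_verts a b c \<union> H_verts a b c"
  shows "gp_sign k \<gamma> = (\<Prod>i = 1..k. arc_sign a b c (gam k \<gamma> i) (gam k \<gamma> (i + 1)))"
proof -
  have k: "0 < k"
    using assms(1) by simp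
  have abc: "(a, b, c) \<in> colour_perms"
    using assms(3,4) by (intro mem_colour_perms) simp_all
  note slice = slice_sign_eq_arc_sign[OF k assms(2) abc]
  have vertex: "gam k \<gamma> i \<in> T_verts a b c \<union> H_verts a b c" if "1 \<le> i" for i
    using that
  proof (induction rule: nat_induct_at_least)
    case (Suc i)
    then show ?case
      using slice by blast
  qed (use assms(5) in simp)
  have "gp_sign k \<gamma> = (\<Prod>i<k. slice_sign k \<gamma> (Suc (Suc i)))"
    using gp_sign_eq_prod_slice_sign[of k \<gamma> 2] by simp
  also have "\<dots> = (\<Prod>i<k. arc_sign a b c (gam k \<gamma> (Suc i)) (gam k \<gamma> (Suc (Suc i))))"
    using slice[OF vertex] by simp
  also have "\<dots> = (\<Prod>i = 1..k. arc_sign a b c (gam k \<gamma> i) (gam k \<gamma> (i + 1)))"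
    by (simp add: prod.atLeast1_atMost_eq)
  finally show ?thesis .
qed

end
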